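(* Let $(\Omega,\mathcal F)$ be a measurable space with $\Sigma\neq\emptyset$, $\nu$ a finite measure on it, and $\mu$ a finite measure with $\mu\ll\nu$. Let $F_\mu(y)=\nu(\{\omega: \frac{d\mu}{d\nu}(\omega)\le y\})$ for $y\ge0$ and $v_\mu(A)=\int_0^\infty\min(\nu(\Omega)-F_\mu(z),\nu(A))\,dz$ for $A\in\mathcal F$. Then: (1) $v_\mu$ is non-decreasing, continuous, submodular, and $v_\mu(\emptyset)=0$; (2) $v_\mu(\{\omega:\frac{d\mu}{d\nu}(\omega)>y\})=\mu(\{\omega:\frac{d\mu}{d\nu}(\omega)>y\})$ for all $y\ge0$; (3) for every non-negative measurable $f:\Omega\to[0,\infty)$, with $v_\mu(f)=\int_0^\infty v_\mu(\{\omega: f(\omega)>z\})\,dz$, $$v_\mu(f)\ge\sup\Big\{\int_\Omega f\,d\mu'\ \Big|\ \mu'\text{ a finite measure},\ \mu'\ll\nu,\ F_{\mu'}=F_\mu\Big\};$$ in particular $v_\mu(A)\ge\sup\{\mu'(A)\mid \mu'\text{ finite measure},\ \mu'\ll\nu,\ F_{\mu'}=F_\mu\}$ for all $A\in\mathcal F$.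
   Context: $\Sigma$ denotes the set of all classes $\mathcal I\subset\mathcal F$ that are chains (totally ordered by inclusion), contain $\emptyset$ and $\Omega$, and generate $\mathcal F$ as a $\sigma$-algebra. $\frac{d\mu}{d\nu}$ is the (non-negative) Radon–Nikodym derivative. $v$ is non-decreasing if $v(A)\le v(B)$ for $A\subset B$; submodular if $v(A)+v(B)\ge v(A\cup B)+v(A\cap B)$. For $\mathcal I\in\Sigma$ let $\mathcal J$ be the algebra generated by $\mathcal I$, whose elements are the sets $\bigcup_{i=1}^n (C_i\cap D_i^c)$ with $C_1\supset D_1\supset\cdots\supset C_n\supset D_n$ in $\mathcal I$; define $\mu_{v,\mathcal I}(\bigcup_{i=1}^n (C_i\cap D_i^c))=\sum_{i=1}^n(v(C_i)-v(D_i))$. A non-decreasing $v$ is continuous if for every $\mathcal I\in\Sigma$ this $\mu_{v,\mathcal I}$ is $\sigma$-additive on $\mathcal J$. $F_{\mu'}$ is defined from $\mu'$ in the same way as $F_\mu$. *)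

theory Defs
  imports "HOL-Probability.Probability"
begin

definition Sigma_cls :: "'a measure \<Rightarrow> 'a set set set" where
  "Sigma_cls M = {I. I \<subseteq> sets M \<and> (\<forall>A\<in>I. \<forall>B\<in>I. A \<subseteq> B \<or> B \<subseteq> A)
       \<and> {} \<in> I \<and> space M \<in> I \<and> sigma_sets (space M) I = sets M}"

definition chain_rep :: "'a set set \<Rightarrow> nat \<Rightarrow> (nat \<Rightarrow> 'a set) \<Rightarrow> (nat \<Rightarrow> 'a set) \<Rightarrow> bool" where
  "chain_rep I n C D \<longleftrightarrow> (\<forall>i<n. C i \<in> I \<and> D i \<in> I \<and> D i \<subseteq> C i)
      \<and> (\<forall>i. Suc i < n \<longrightarrow> C (Suc i) \<subseteq> D i)"

definition alg_gen :: "'a set set \<Rightarrow> 'a set set" where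
  "alg_gen I = {A. \<exists>n C D. chain_rep I n C D \<and> A = (\<Union>i<n. C i - D i)}"

definition mu_vI :: "('a set \<Rightarrow> real) \<Rightarrow> 'a set set \<Rightarrow> 'a set \<Rightarrow> real" where
  "mu_vI v I A = (SOME s. \<exists>n C D. chain_rep I n C D \<and> A = (\<Union>i<n. C i - D i)
                      \<and> s = (\<Sum>i<n. v (C i) - v (D i)))"

definition sigma_additive_on :: "'a set set \<Rightarrow> ('a set \<Rightarrow> real) \<Rightarrow> bool" where
  "sigma_additive_on J m \<longleftrightarrow> (\<forall>A :: nat \<Rightarrow> 'a set. range A \<subseteq> J \<longrightarrow> disjoint_family A
      \<longrightarrow> (\<Union>n. A n) \<in> J \<longrightarrow> (\<lambda>n. m (A n)) sums m (\<Union>n. A n))"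

definition nondecreasing_cap :: "'a measure \<Rightarrow> ('a set \<Rightarrow> real) \<Rightarrow> bool" where
  "nondecreasing_cap M v \<longleftrightarrow> (\<forall>A\<in>sets M. \<forall>B\<in>sets M. A \<subseteq> B \<longrightarrow> v A \<le> v B)"

definition submodular_cap :: "'a measure \<Rightarrow> ('a set \<Rightarrow> real) \<Rightarrow> bool" where
  "submodular_cap M v \<longleftrightarrow> (\<forall>A\<in>sets M. \<forall>B\<in>sets M. v A + v B \<ge> v (A \<union> B) + v (A \<inter> B))"

definition continuous_cap :: "'a measure \<Rightarrow> ('a set \<Rightarrow> real) \<Rightarrow> bool" where
  "continuous_cap M v \<longleftrightarrow> (\<forall>I\<in>Sigma_cls M. sigma_additive_on (alg_gen I) (mu_vI v I))"

text \<open>F_mu(y) = nu({dmu/dnu <= y}); here M plays the role of nu.\<close>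
definition Fdist :: "'a measure \<Rightarrow> 'a measure \<Rightarrow> real \<Rightarrow> real" where
  "Fdist M \<mu> y = measure M {\<omega>\<in>space M. RN_deriv M \<mu> \<omega> \<le> ennreal y}"

definition v_mu :: "'a measure \<Rightarrow> 'a measure \<Rightarrow> 'a set \<Rightarrow> real" where
  "v_mu M \<mu> A = (\<integral>z\<in>{0..}. min (measure M (space M) - Fdist M \<mu> z) (measure M A) \<partial>lborel)"

definition v_fun :: "'a measure \<Rightarrow> ('a set \<Rightarrow> real) \<Rightarrow> ('a \<Rightarrow> real) \<Rightarrow> ennreal" where
  "v_fun M v f = (\<integral>\<^sup>+ z\<in>{0..}. ennreal (v {\<omega>\<in>space M. f \<omega> > z}) \<partial>lborel)"

definition same_F_measures :: "'a measure \<Rightarrow> 'a measure \<Rightarrow> 'a measure set" where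
  "same_F_measures M \<mu> = {\<mu>'. sets \<mu>' = sets M \<and> finite_measure \<mu>' \<and> absolutely_continuous M \<mu>'
       \<and> (\<forall>y\<ge>0. Fdist M \<mu>' y = Fdist M \<mu> y)}"

end

theory Submission
  imports Defs
begin

text \<open>
  Write \<open>h = d\<mu>/d\<nu>\<close> and \<open>G(z) = \<nu>{h > z} = \<nu>(\<Omega>) - F\<^sub>\<mu>(z)\<close>. Then
  \<open>v\<^sub>\<mu>(A) = \<integral>\<^sub>0\<^sup>\<infinity> min(G(z), \<nu>(A)) dz\<close> depends on \<open>A\<close> only through \<open>\<nu>(A)\<close>, and
  \<open>t \<mapsto> min(G(z), t)\<close> is nondecreasing and concave; this gives monotonicity and
  submodularity. By the layer cake formula, \<open>\<mu>'(A) = \<integral>\<^sub>0\<^sup>\<infinity> \<nu>({h' > z} \<inter> A) dz\<close>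
  for \<open>h' = d\<mu>'/d\<nu>\<close>; if \<open>F\<^sub>\<mu>' = F\<^sub>\<mu>\<close> the integrand is at most
  \<open>min(G(z), \<nu>(A))\<close>, with equality for \<open>\<mu>' = \<mu>\<close> and \<open>A = {h > y}\<close>. Integrating over
  the superlevel sets of \<open>f\<close> bounds \<open>\<integral> f d\<mu>'\<close> by \<open>v\<^sub>\<mu>(f)\<close>.

  For continuity along a chain \<open>I\<close>, send \<open>\<Union>\<^sub>i (C\<^sub>i - D\<^sub>i)\<close> to the union of the
  intervals \<open>(\<nu>(D\<^sub>i), \<nu>(C\<^sub>i)]\<close>. This set does not depend on the representation, and
  the map preserves inclusion, disjointness and measure. In these terms \<open>mu_vI\<close> becomes
  \<open>S \<mapsto> \<integral>\<^sub>0\<^sup>\<infinity> \<lambda>(S \<inter> (-\<infinity>, G(z)]) dz\<close>, which is \<open>\<sigma>\<close>-additive by monotone convergence.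
\<close>

section \<open>Layer cake formula\<close>

lemma emeasure_lborel_atLeast_0: "emeasure lborel {0::real..} = \<infinity>"
proof (rule ccontr)
  assume "emeasure lborel {0::real..} \<noteq> \<infinity>"
  then obtain r where r: "emeasure lborel {0::real..} = ennreal r" "0 \<le> r"
    by (cases "emeasure lborel {0::real..}") auto
  have "emeasure lborel {0..r + 1} \<le> emeasure lborel {0::real..}"
    by (intro emeasure_mono) auto
  then show False
    using r by (simp add: ennreal_le_iff)
qed

lemma emeasure_lborel_nonneg_less: "emeasure lborel {z::real. 0 \<le> z \<and> ennreal z < e} = e"
proof (cases e)
  case (real r)
  then have "{z. 0 \<le> z \<and> ennreal z < e} = {0..<r}"
    by (auto simp: ennreal_less_iff)
  then show ?thesis
    using real by simp
next
  case top
  then have "{z. 0 \<le> z \<and> ennreal z < e} = {0..}"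
    by auto
  then show ?thesis
    using top emeasure_lborel_atLeast_0 by simp
qed

lemma nn_integral_layer_cake:
  assumes "sigma_finite_measure N" and [measurable]: "h \<in> borel_measurable N"
  shows "(\<integral>\<^sup>+\<omega>. h \<omega> \<partial>N) =
    (\<integral>\<^sup>+z. indicator {0..} z * emeasure N {\<omega>\<in>space N. ennreal z < h \<omega>} \<partial>lborel)"
proof -
  interpret N: sigma_finite_measure N by fact
  interpret pair_sigma_finite lborel N
    by (intro pair_sigma_finite.intro lborel.sigma_finite_measure_axioms N.sigma_finite_measure_axioms)
  let ?f = "\<lambda>(z::real) \<omega>. indicator {(z, \<omega>). 0 \<le> z \<and> ennreal z < h \<omega>} (z, \<omega>) :: ennreal"
  have "(\<integral>\<^sup>+z. indicator {0..} z * emeasure N {\<omega>\<in>space N. ennreal z < h \<omega>} \<partial>lborel)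
      = (\<integral>\<^sup>+z. (\<integral>\<^sup>+\<omega>. ?f z \<omega> \<partial>N) \<partial>lborel)"
  proof (intro nn_integral_cong)
    fix z :: real
    have "(\<integral>\<^sup>+\<omega>. ?f z \<omega> \<partial>N) = indicator {0..} z * (\<integral>\<^sup>+\<omega>. indicator {\<omega>\<in>space N. ennreal z < h \<omega>} \<omega> \<partial>N)"
      by (subst nn_integral_cmult[symmetric]) (auto intro!: nn_integral_cong simp: indicator_def)
    then show "indicator {0..} z * emeasure N {\<omega>\<in>space N. ennreal z < h \<omega>} = (\<integral>\<^sup>+\<omega>. ?f z \<omega> \<partial>N)"
      by simp
  qed
  also have "\<dots> = (\<integral>\<^sup>+\<omega>. (\<integral>\<^sup>+z. ?f z \<omega> \<partial>lborel) \<partial>N)"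
    by (rule Fubini'[symmetric]) measurable
  also have "\<dots> = (\<integral>\<^sup>+\<omega>. h \<omega> \<partial>N)"
  proof (intro nn_integral_cong)
    fix \<omega>
    have "(\<integral>\<^sup>+z. ?f z \<omega> \<partial>lborel) = (\<integral>\<^sup>+z. indicator {z. 0 \<le> z \<and> ennreal z < h \<omega>} z \<partial>lborel)"
      by (intro nn_integral_cong) (simp add: indicator_def)
    also have "\<dots> = h \<omega>"
      by (subst nn_integral_indicator) (simp_all add: emeasure_lborel_nonneg_less)
    finally show "(\<integral>\<^sup>+z. ?f z \<omega> \<partial>lborel) = h \<omega>" .
  qed
  finally show ?thesis ..
qed

lemma emeasure_RN_deriv_layer_cake:
  assumes "sigma_finite_measure M" "absolutely_continuous M N" "sets N = sets M" "A \<in> sets M"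
  shows "emeasure N A = (\<integral>\<^sup>+z. indicator {0..} z *
    emeasure M ({\<omega>\<in>space M. ennreal z < RN_deriv M N \<omega>} \<inter> A) \<partial>lborel)"
proof -
  interpret sigma_finite_measure M by fact
  have "emeasure N A = emeasure (density M (RN_deriv M N)) A"
    using density_RN_deriv[OF assms(2,3)] by simp
  also have "\<dots> = (\<integral>\<^sup>+\<omega>. RN_deriv M N \<omega> * indicator A \<omega> \<partial>M)"
    using assms(4) by (intro emeasure_density) auto
  also have "\<dots> = (\<integral>\<^sup>+z. indicator {0..} z *
      emeasure M {\<omega>\<in>space M. ennreal z < RN_deriv M N \<omega> * indicator A \<omega>} \<partial>lborel)"
    using assms(4) by (intro nn_integral_layer_cake sigma_finite_measure_axioms) auto
  also have "\<dots> = (\<integral>\<^sup>+z. indicator {0..} z *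
      emeasure M ({\<omega>\<in>space M. ennreal z < RN_deriv M N \<omega>} \<inter> A) \<partial>lborel)"
    by (intro nn_integral_cong arg_cong2[where f = "(*)"] arg_cong[where f = "emeasure M"] refl)
      (auto simp: indicator_def)
  finally show ?thesis .
qed

section \<open>The capacity \<open>v_mu\<close>\<close>

lemma ennreal_max: "ennreal (max x y) = max (ennreal x) (ennreal y)"
  by (rule max_of_mono[symmetric]) (simp add: mono_def ennreal_leI)

lemma measure_space_minus_Fdist:
  assumes "finite_measure M"
  shows "measure M (space M) - Fdist M N z = measure M {\<omega>\<in>space M. ennreal z < RN_deriv M N \<omega>}"
proof -
  have "{\<omega>\<in>space M. ennreal z < RN_deriv M N \<omega>} = space M - {\<omega>\<in>space M. RN_deriv M N \<omega> \<le> ennreal z}"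
    by auto
  then show ?thesis
    unfolding Fdist_def by (simp add: finite_measure.finite_measure_compl[OF assms])
qed

locale ac_finite_measures = M: finite_measure M + mu: finite_measure \<mu> for M \<mu> :: "'a measure" +
  assumes sets_eq: "sets \<mu> = sets M" and abs_cont: "absolutely_continuous M \<mu>"
begin

definition tail :: "real \<Rightarrow> real" where
  "tail z = measure M {\<omega>\<in>space M. ennreal z < RN_deriv M \<mu> \<omega>}"

lemma tail_nonneg: "0 \<le> tail z"
  by (simp add: tail_def)

lemma tail_antimono: "z \<le> z' \<Longrightarrow> tail z' \<le> tail z"
  unfolding tail_def
  by (intro M.finite_measure_mono) (auto intro: order.strict_trans1 ennreal_leI)

lemma borel_measurable_tail[measurable]: "tail \<in> borel_measurable borel"
proof -
  have "mono (\<lambda>z. - tail z)"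
    by (auto simp: mono_def intro: tail_antimono)
  then have "(\<lambda>z. - (- tail z)) \<in> borel_measurable borel"
    by (intro borel_measurable_uminus borel_measurable_mono)
  then show ?thesis
    by simp
qed

lemma min_tail_tail: "min (tail z) (tail z') = tail (max z z')"
  using tail_antimono[of z z'] tail_antimono[of z' z] by (auto simp: max_def min_def)

lemma emeasure_superlevel_RN_deriv:
  "emeasure M {\<omega>\<in>space M. ennreal z < RN_deriv M \<mu> \<omega>} = ennreal (tail z)"
  unfolding tail_def by (simp add: M.emeasure_eq_measure)

lemma measure_space_minus_Fdist_eq_tail: "measure M (space M) - Fdist M \<mu> z = tail z"
  unfolding tail_def by (rule measure_space_minus_Fdist) unfold_locales

lemma nn_integral_tail: "(\<integral>\<^sup>+z. ennreal (indicator {0..} z * tail z) \<partial>lborel) = emeasure \<mu> (space M)"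
proof -
  have "emeasure \<mu> (space M) = (\<integral>\<^sup>+z. indicator {0..} z *
      emeasure M ({\<omega>\<in>space M. ennreal z < RN_deriv M \<mu> \<omega>} \<inter> space M) \<partial>lborel)"
    by (intro emeasure_RN_deriv_layer_cake sets_eq abs_cont M.sigma_finite_measure_axioms) simp
  also have "\<dots> = (\<integral>\<^sup>+z. ennreal (indicator {0..} z * tail z) \<partial>lborel)"
    by (intro nn_integral_cong) (simp add: Int_absorb2 emeasure_superlevel_RN_deriv indicator_def)
  finally show ?thesis ..
qed

lemma set_integral_dominated_by_tail:
  assumes [measurable]: "f \<in> borel_measurable borel"
    and bounds: "\<And>z. 0 \<le> z \<Longrightarrow> 0 \<le> f z \<and> f z \<le> tail z"
  shows "set_integrable lborel {0..} f"
    and "ennreal (\<integral>z\<in>{0..}. f z \<partial>lborel) = (\<integral>\<^sup>+z. ennreal (indicator {0..} z * f z) \<partial>lborel)"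
proof -
  have "(\<integral>\<^sup>+z. ennreal (norm (indicator {0..} z *\<^sub>R f z)) \<partial>lborel)
      \<le> (\<integral>\<^sup>+z. ennreal (indicator {0..} z * tail z) \<partial>lborel)"
    using bounds by (intro nn_integral_mono ennreal_leI) (simp add: indicator_def)
  also have "\<dots> < \<infinity>"
    by (simp add: nn_integral_tail less_top[symmetric])
  finally show integrable: "set_integrable lborel {0..} f"
    unfolding set_integrable_def by (intro integrableI_bounded) auto
  have "(\<integral>\<^sup>+z. ennreal (indicator {0..} z *\<^sub>R f z) \<partial>lborel)
      = ennreal (integral\<^sup>L lborel (\<lambda>z. indicator {0..} z *\<^sub>R f z))"
    using integrable bounds unfolding set_integrable_def
    by (intro nn_integral_eq_integral) (auto simp: indicator_def)
  then show "ennreal (\<integral>z\<in>{0..}. f z \<partial>lborel) = (\<integral>\<^sup>+z. ennreal (indicator {0..} z * f z) \<partial>lborel)"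
    unfolding set_lebesgue_integral_def by simp
qed

lemma v_mu_eq_tail: "v_mu M \<mu> A = (\<integral>z\<in>{0..}. min (tail z) (measure M A) \<partial>lborel)"
  unfolding v_mu_def measure_space_minus_Fdist_eq_tail ..

lemma set_integrable_min_tail: "0 \<le> t \<Longrightarrow> set_integrable lborel {0..} (\<lambda>z. min (tail z) t)"
  by (rule set_integral_dominated_by_tail) (auto simp: tail_nonneg)

lemma ennreal_v_mu:
  "ennreal (v_mu M \<mu> A) = (\<integral>\<^sup>+z. ennreal (indicator {0..} z * min (tail z) (measure M A)) \<partial>lborel)"
  unfolding v_mu_eq_tail by (rule set_integral_dominated_by_tail) (auto simp: tail_nonneg)

lemma v_mu_nonneg: "0 \<le> v_mu M \<mu> A"
  unfolding v_mu_eq_tail set_lebesgue_integral_def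
  by (intro integral_nonneg_AE AE_I2) (auto simp: tail_nonneg indicator_def)

lemma v_mu_mono: "measure M A \<le> measure M B \<Longrightarrow> v_mu M \<mu> A \<le> v_mu M \<mu> B"
  unfolding v_mu_eq_tail by (intro set_integral_mono set_integrable_min_tail) auto

lemma v_mu_empty: "v_mu M \<mu> {} = 0"
  using ennreal_v_mu[of "{}"] v_mu_nonneg[of "{}"] by (simp add: tail_nonneg)

lemma ennreal_v_mu_diff:
  assumes "measure M B \<le> measure M A"
  shows "ennreal (v_mu M \<mu> A - v_mu M \<mu> B) = (\<integral>\<^sup>+z. ennreal (indicator {0..} z *
    (min (tail z) (measure M A) - min (tail z) (measure M B))) \<partial>lborel)"
proof -
  have bound: "0 \<le> min t a - min t b \<and> min t a - min t b \<le> t"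
    if "0 \<le> b" "b \<le> a" "0 \<le> t" for t a b :: real
    using that by (auto simp: min_def)
  have "v_mu M \<mu> A - v_mu M \<mu> B
      = (\<integral>z\<in>{0..}. min (tail z) (measure M A) - min (tail z) (measure M B) \<partial>lborel)"
    unfolding v_mu_eq_tail by (intro set_integral_diff(2)[symmetric] set_integrable_min_tail) auto
  also have "ennreal \<dots> = (\<integral>\<^sup>+z. ennreal (indicator {0..} z *
      (min (tail z) (measure M A) - min (tail z) (measure M B))) \<partial>lborel)"
    using assms by (intro set_integral_dominated_by_tail(2) bound) (auto simp: tail_nonneg)
  finally show ?thesis .
qed

lemma min_add_min_le:
  fixes g a b u w :: real
  assumes "a + b = u + w" "w \<le> a" "a \<le> u"
  shows "min g u + min g w \<le> min g a + min g b"
  using assms by (auto simp: min_def)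

lemma v_mu_submodular:
  assumes "A \<in> sets M" "B \<in> sets M"
  shows "v_mu M \<mu> (A \<union> B) + v_mu M \<mu> (A \<inter> B) \<le> v_mu M \<mu> A + v_mu M \<mu> B"
proof -
  have "measure M (A \<union> B) + measure M (A \<inter> B) = measure M A + measure M B"
    using emeasure_Un_Int[OF assms] by (simp add: M.emeasure_eq_measure flip: ennreal_plus)
  moreover have "measure M (A \<inter> B) \<le> measure M A" "measure M A \<le> measure M (A \<union> B)"
    using assms by (auto intro!: M.finite_measure_mono)
  ultimately show ?thesis
    unfolding v_mu_eq_tail
    by (subst (1 2) set_integral_add(2)[symmetric], (intro set_integrable_min_tail; simp)+)
      (intro set_integral_mono set_integral_add set_integrable_min_tail min_add_min_le; simp)
qed

lemma v_mu_superlevel: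
  "v_mu M \<mu> {\<omega>\<in>space M. ennreal y < RN_deriv M \<mu> \<omega>}
    = measure \<mu> {\<omega>\<in>space M. ennreal y < RN_deriv M \<mu> \<omega>}"
proof -
  let ?B = "{\<omega>\<in>space M. ennreal y < RN_deriv M \<mu> \<omega>}"
  have "emeasure \<mu> ?B = (\<integral>\<^sup>+z. indicator {0..} z *
      emeasure M ({\<omega>\<in>space M. ennreal z < RN_deriv M \<mu> \<omega>} \<inter> ?B) \<partial>lborel)"
    by (intro emeasure_RN_deriv_layer_cake sets_eq abs_cont M.sigma_finite_measure_axioms) measurable
  also have "\<dots> = (\<integral>\<^sup>+z. ennreal (indicator {0..} z * min (tail z) (measure M ?B)) \<partial>lborel)"
  proof (intro nn_integral_cong)
    fix z :: real
    have "{\<omega>\<in>space M. ennreal z < RN_deriv M \<mu> \<omega>} \<inter> ?B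
        = {\<omega>\<in>space M. ennreal (max z y) < RN_deriv M \<mu> \<omega>}"
      by (auto simp: ennreal_max)
    then show "indicator {0..} z * emeasure M ({\<omega>\<in>space M. ennreal z < RN_deriv M \<mu> \<omega>} \<inter> ?B)
        = ennreal (indicator {0..} z * min (tail z) (measure M ?B))"
      by (simp add: emeasure_superlevel_RN_deriv min_tail_tail indicator_def tail_nonneg flip: tail_def)
  qed
  also have "\<dots> = ennreal (v_mu M \<mu> ?B)"
    by (rule ennreal_v_mu[symmetric])
  finally show ?thesis
    using v_mu_nonneg by (simp add: mu.emeasure_eq_measure)
qed

lemma measure_superlevel_same_F:
  assumes "\<mu>' \<in> same_F_measures M \<mu>" "0 \<le> z"
  shows "measure M {\<omega>\<in>space M. ennreal z < RN_deriv M \<mu>' \<omega>} = tail z"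
  using assms measure_space_minus_Fdist[OF M.finite_measure_axioms, of \<mu>' z]
  by (simp add: same_F_measures_def flip: measure_space_minus_Fdist_eq_tail)

lemma emeasure_le_v_mu:
  assumes "\<mu>' \<in> same_F_measures M \<mu>" and [measurable]: "A \<in> sets M"
  shows "emeasure \<mu>' A \<le> ennreal (v_mu M \<mu> A)"
proof -
  have "emeasure \<mu>' A = (\<integral>\<^sup>+z. indicator {0..} z *
      emeasure M ({\<omega>\<in>space M. ennreal z < RN_deriv M \<mu>' \<omega>} \<inter> A) \<partial>lborel)"
    using assms(1) unfolding same_F_measures_def
    by (intro emeasure_RN_deriv_layer_cake M.sigma_finite_measure_axioms) auto
  also have "\<dots> \<le> (\<integral>\<^sup>+z. ennreal (indicator {0..} z * min (tail z) (measure M A)) \<partial>lborel)"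
  proof (intro nn_integral_mono)
    fix z :: real
    let ?S = "{\<omega>\<in>space M. ennreal z < RN_deriv M \<mu>' \<omega>}"
    have "measure M (?S \<inter> A) \<le> measure M ?S" "measure M (?S \<inter> A) \<le> measure M A"
      by (intro M.finite_measure_mono; measurable)+
    then show "indicator {0..} z * emeasure M (?S \<inter> A)
        \<le> ennreal (indicator {0..} z * min (tail z) (measure M A))"
      using measure_superlevel_same_F[OF assms(1), of z]
      by (auto simp: indicator_def M.emeasure_eq_measure intro!: ennreal_leI)
  qed
  also have "\<dots> = ennreal (v_mu M \<mu> A)"
    by (rule ennreal_v_mu[symmetric])
  finally show ?thesis .
qed

lemma nn_integral_le_v_fun:
  assumes "\<mu>' \<in> same_F_measures M \<mu>" and [measurable]: "f \<in> borel_measurable M"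
  shows "(\<integral>\<^sup>+\<omega>. ennreal (f \<omega>) \<partial>\<mu>') \<le> v_fun M (v_mu M \<mu>) f"
proof -
  have sets': "sets \<mu>' = sets M" and finite': "finite_measure \<mu>'"
    using assms(1) by (auto simp: same_F_measures_def)
  interpret mu': finite_measure \<mu>' by (fact finite')
  have [measurable]: "f \<in> borel_measurable \<mu>'"
    by (subst measurable_cong_sets[OF sets' refl]) (fact assms(2))
  have "(\<integral>\<^sup>+\<omega>. ennreal (f \<omega>) \<partial>\<mu>') = (\<integral>\<^sup>+z. indicator {0..} z *
      emeasure \<mu>' {\<omega>\<in>space \<mu>'. ennreal z < ennreal (f \<omega>)} \<partial>lborel)"
    by (intro nn_integral_layer_cake mu'.sigma_finite_measure_axioms) measurable
  also have "\<dots> \<le> (\<integral>\<^sup>+z\<in>{0..}. ennreal (v_mu M \<mu> {\<omega>\<in>space M. f \<omega> > z}) \<partial>lborel)"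
  proof (intro nn_integral_mono)
    fix z :: real
    have "0 \<le> z \<Longrightarrow> {\<omega>\<in>space \<mu>'. ennreal z < ennreal (f \<omega>)} = {\<omega>\<in>space M. f \<omega> > z}"
      using sets_eq_imp_space_eq[OF sets'] by (auto simp: ennreal_less_iff)
    then show "indicator {0..} z * emeasure \<mu>' {\<omega>\<in>space \<mu>'. ennreal z < ennreal (f \<omega>)}
        \<le> ennreal (v_mu M \<mu> {\<omega>\<in>space M. f \<omega> > z}) * indicator {0..} z"
      using emeasure_le_v_mu[OF assms(1), of "{\<omega>\<in>space M. f \<omega> > z}"] by (auto simp: indicator_def)
  qed
  also have "\<dots> = v_fun M (v_mu M \<mu>) f"
    unfolding v_fun_def ..
  finally show ?thesis .
qed

end

section \<open>Chains and their interval images\<close>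

lemma chain_rep_mem: "chain_rep I n C D \<Longrightarrow> i < n \<Longrightarrow> C i \<in> I \<and> D i \<in> I \<and> D i \<subseteq> C i"
  by (simp add: chain_rep_def)

lemma chain_rep_C_subset_D:
  assumes "chain_rep I n C D" "j < n" "i < j"
  shows "C j \<subseteq> D i"
  using assms(2,3)
proof (induction j)
  case 0
  then show ?case by simp
next
  case (Suc j)
  then have "C (Suc j) \<subseteq> D j"
    using assms(1) by (simp add: chain_rep_def)
  moreover have "D j \<subseteq> D i"
  proof (cases "i = j")
    case False
    then show ?thesis
      using Suc chain_rep_mem[OF assms(1), of j] by auto
  qed simp
  ultimately show ?case by blast
qed

lemma chain_rep_antimono:
  assumes "chain_rep I n C D" "j < n" "i \<le> j"
  shows "C j \<subseteq> C i" and "D j \<subseteq> D i"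
proof -
  have "C j \<subseteq> C i \<and> D j \<subseteq> D i"
  proof (cases "i = j")
    case False
    then have "C j \<subseteq> D i"
      using chain_rep_C_subset_D[OF assms(1,2)] assms(3) by simp
    then show ?thesis
      using chain_rep_mem[OF assms(1), of i] chain_rep_mem[OF assms(1,2)] assms(2,3) by auto
  qed simp
  then show "C j \<subseteq> C i" and "D j \<subseteq> D i" by auto
qed

lemma disjoint_family_on_chain_rep:
  assumes "chain_rep I n C D"
  shows "disjoint_family_on (\<lambda>i. C i - D i) {..<n}"
  unfolding disjoint_family_on_def
proof (intro ballI impI)
  fix i j assume "i \<in> {..<n}" "j \<in> {..<n}" "i \<noteq> j"
  then show "(C i - D i) \<inter> (C j - D j) = {}"
    using chain_rep_C_subset_D[OF assms, of i j] chain_rep_C_subset_D[OF assms, of j i]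
    by (cases "i < j") auto
qed

lemma alg_genE:
  assumes "X \<in> alg_gen I"
  obtains n C D where "chain_rep I n C D" "X = (\<Union>i<n. C i - D i)"
  using assms unfolding alg_gen_def by blast

lemma mu_vI_some_rep:
  assumes "X \<in> alg_gen I"
  obtains n C D where "chain_rep I n C D" "X = (\<Union>i<n. C i - D i)"
    and "mu_vI v I X = (\<Sum>i<n. v (C i) - v (D i))"
proof -
  have "\<exists>s n C D. chain_rep I n C D \<and> X = (\<Union>i<n. C i - D i) \<and> s = (\<Sum>i<n. v (C i) - v (D i))"
    using assms unfolding alg_gen_def by auto
  from someI_ex[OF this] show ?thesis
    using that unfolding mu_vI_def by blast
qed

locale measure_chain = finite_measure M for M :: "'a measure" +
  fixes I :: "'a set set"
  assumes chain_sets: "I \<subseteq> sets M"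
    and chain_total: "\<And>A B. A \<in> I \<Longrightarrow> B \<in> I \<Longrightarrow> A \<subseteq> B \<or> B \<subseteq> A"
    and empty_in_chain: "{} \<in> I" and space_in_chain: "space M \<in> I"
begin

definition intervals :: "nat \<Rightarrow> (nat \<Rightarrow> 'a set) \<Rightarrow> (nat \<Rightarrow> 'a set) \<Rightarrow> real set" where
  "intervals n C D = (\<Union>i<n. {measure M (D i)<..measure M (C i)})"

lemma sets_intervals[measurable]: "intervals n C D \<in> sets borel"
  unfolding intervals_def by (intro sets.finite_UN) auto

lemma measure_chain_rep_D_le_C: "chain_rep I n C D \<Longrightarrow> i < n \<Longrightarrow> measure M (D i) \<le> measure M (C i)"
  using chain_rep_mem[of I n C D i] chain_sets by (intro finite_measure_mono) auto

lemma measure_chain_rep_C_le_D: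
  "chain_rep I n C D \<Longrightarrow> j < n \<Longrightarrow> i < j \<Longrightarrow> measure M (C j) \<le> measure M (D i)"
  using chain_rep_C_subset_D[of I n C D j i] chain_rep_mem[of I n C D i] chain_sets
  by (intro finite_measure_mono) auto

lemma disjoint_family_on_intervals:
  assumes "chain_rep I n C D"
  shows "disjoint_family_on (\<lambda>i. {measure M (D i)<..measure M (C i)}) {..<n}"
  unfolding disjoint_family_on_def
proof (intro ballI impI)
  fix i j assume "i \<in> {..<n}" "j \<in> {..<n}" "i \<noteq> j"
  then show "{measure M (D i)<..measure M (C i)} \<inter> {measure M (D j)<..measure M (C j)} = {}"
    using measure_chain_rep_C_le_D[OF assms, of i j] measure_chain_rep_C_le_D[OF assms, of j i]
    by (cases "i < j") auto
qed

lemma emeasure_intervals_Int_atMost: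
  assumes "chain_rep I n C D"
  shows "emeasure lborel (intervals n C D \<inter> {..g})
    = ennreal (\<Sum>i<n. min g (measure M (C i)) - min g (measure M (D i)))"
proof -
  have "disjoint_family_on (\<lambda>i. {measure M (D i)<..measure M (C i)} \<inter> {..g}) {..<n}"
    using disjoint_family_on_intervals[OF assms] unfolding disjoint_family_on_def by blast
  then have "emeasure lborel (intervals n C D \<inter> {..g})
      = (\<Sum>i<n. emeasure lborel ({measure M (D i)<..measure M (C i)} \<inter> {..g}))"
    unfolding intervals_def UN_extend_simps(4) by (intro sum_emeasure[symmetric]) auto
  also have "\<dots> = (\<Sum>i<n. ennreal (min g (measure M (C i)) - min g (measure M (D i))))"
  proof (intro sum.cong refl)
    fix i assume "i \<in> {..<n}"
    then have "measure M (D i) \<le> measure M (C i)"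
      using measure_chain_rep_D_le_C[OF assms] by simp
    moreover have "{measure M (D i)<..measure M (C i)} \<inter> {..g} = {measure M (D i)<..min g (measure M (C i))}"
      by auto
    ultimately show "emeasure lborel ({measure M (D i)<..measure M (C i)} \<inter> {..g})
        = ennreal (min g (measure M (C i)) - min g (measure M (D i)))"
      by (cases "measure M (D i) \<le> g") (auto simp: min_def)
  qed
  also have "\<dots> = ennreal (\<Sum>i<n. min g (measure M (C i)) - min g (measure M (D i)))"
    using measure_chain_rep_D_le_C[OF assms] by (intro sum_ennreal) (force simp: min_def)
  finally show ?thesis .
qed

lemma emeasure_intervals:
  assumes "chain_rep I n C D"
  shows "emeasure lborel (intervals n C D) = emeasure M (\<Union>i<n. C i - D i)"
proof -
  have sets: "C i \<in> sets M" "D i \<in> sets M" "D i \<subseteq> C i" if "i < n" for i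
    using chain_rep_mem[OF assms that] chain_sets by auto
  have "emeasure lborel (intervals n C D) = (\<Sum>i<n. emeasure lborel {measure M (D i)<..measure M (C i)})"
    unfolding intervals_def using disjoint_family_on_intervals[OF assms]
    by (intro sum_emeasure[symmetric]) auto
  also have "\<dots> = (\<Sum>i<n. emeasure M (C i - D i))"
    using measure_chain_rep_D_le_C[OF assms] sets
    by (intro sum.cong refl) (auto simp: emeasure_eq_measure finite_measure_Diff)
  also have "\<dots> = emeasure M (\<Union>i<n. C i - D i)"
    using disjoint_family_on_chain_rep[OF assms] sets by (intro sum_emeasure) auto
  finally show ?thesis .
qed

lemma Ioc_measure_disjoint:
  assumes "C \<in> I" "D \<in> I" "H \<in> I" "L \<in> I" and "(C - D) \<inter> (H - L) = {}"
  shows "{measure M D<..measure M C} \<inter> {measure M L<..measure M H} = {}"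
proof -
  have "C \<inter> H \<subseteq> D \<union> L"
    using assms(5) by blast
  then have "measure M (C \<inter> H) \<le> measure M (D \<union> L)"
    using assms(1-4) chain_sets by (intro finite_measure_mono) auto
  moreover have "min (measure M C) (measure M H) \<le> measure M (C \<inter> H)"
    using chain_total[OF assms(1,3)] by (elim disjE) (simp_all add: Int_absorb1 Int_absorb2)
  moreover have "measure M (D \<union> L) \<le> max (measure M D) (measure M L)"
    using chain_total[OF assms(2,4)] by (elim disjE) (simp_all add: Un_absorb1 Un_absorb2)
  ultimately show ?thesis
    by auto
qed

lemma interval_gap:
  assumes rep: "chain_rep I m C D" and x: "x \<notin> intervals m C D" "0 < x" "x \<le> measure M (space M)"
  obtains H L where "H \<in> I" "L \<in> I" "(\<Union>k<m. C k - D k) \<inter> (H - L) = {}"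
    and "x \<in> {measure M L<..measure M H}"
proof -
  define j where "j = (LEAST k. m \<le> k \<or> measure M (C k) < x)"
  have j: "m \<le> j \<or> measure M (C j) < x"
    unfolding j_def by (rule LeastI[of _ m]) simp
  have "j \<le> m"
    unfolding j_def by (rule Least_le) simp
  have before_j: "k < m \<and> x \<le> measure M (C k)" if "k < j" for k
    using not_less_Least[OF that[unfolded j_def]] by auto
  have D_before_j: "x \<le> measure M (D k)" if "k < j" for k
    using before_j[OF that] x(1) unfolding intervals_def by (force simp: not_le)
  \<comment> \<open>\<open>x\<close> lies in the gap between the intervals with indices \<open>j - 1\<close> and \<open>j\<close>\<close>
  define H where "H = (if j = 0 then space M else D (j - 1))"
  define L where "L = (if j < m then C j else {})"
  have "H \<in> I" "L \<in> I"
    unfolding H_def L_def using space_in_chain empty_in_chain chain_rep_mem[OF rep] \<open>j \<le> m\<close> by auto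
  moreover have "x \<in> {measure M L<..measure M H}"
    unfolding H_def L_def using j x(2,3) D_before_j[of "j - 1"] by auto
  moreover have "(C k - D k) \<inter> (H - L) = {}" if "k < m" for k
  proof (cases "k < j")
    case True
    then have "H \<subseteq> D k"
      unfolding H_def using chain_rep_antimono(2)[OF rep, of "j - 1" k] \<open>j \<le> m\<close> by auto
    then show ?thesis by blast
  next
    case False
    then have "C k \<subseteq> L"
      unfolding L_def using chain_rep_antimono(1)[OF rep \<open>k < m\<close>, of j] \<open>k < m\<close> by auto
    then show ?thesis by blast
  qed
  ultimately show ?thesis
    using that by blast
qed

lemma intervals_mono:
  assumes rep: "chain_rep I n C D" and rep': "chain_rep I m C' D'"
    and subset: "(\<Union>i<n. C i - D i) \<subseteq> (\<Union>j<m. C' j - D' j)"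
  shows "intervals n C D \<subseteq> intervals m C' D'"
proof
  fix x assume "x \<in> intervals n C D"
  then obtain i where i: "i < n" "x \<in> {measure M (D i)<..measure M (C i)}"
    unfolding intervals_def by auto
  have "C i \<in> sets M"
    using chain_rep_mem[OF rep i(1)] chain_sets by auto
  then have "measure M (C i) \<le> measure M (space M)"
    by (intro finite_measure_mono sets.sets_into_space) auto
  then have "0 < x" "x \<le> measure M (space M)"
    using i(2) measure_nonneg[of M "D i"] unfolding greaterThanAtMost_iff by linarith+
  show "x \<in> intervals m C' D'"
  proof (rule ccontr)
    assume "x \<notin> intervals m C' D'"
    then obtain H L where "H \<in> I" "L \<in> I" "(\<Union>j<m. C' j - D' j) \<inter> (H - L) = {}"
      and "x \<in> {measure M L<..measure M H}"
      using interval_gap[OF rep'] \<open>0 < x\<close> \<open>x \<le> measure M (space M)\<close> by metis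
    moreover have "(C i - D i) \<inter> (H - L) = {}"
      using calculation(3) subset i(1) by blast
    ultimately show False
      using Ioc_measure_disjoint[of "C i" "D i" H L] chain_rep_mem[OF rep i(1)] i(2) by blast
  qed
qed

lemma intervals_disjoint:
  assumes rep: "chain_rep I n C D" and rep': "chain_rep I m C' D'"
    and disjoint: "(\<Union>i<n. C i - D i) \<inter> (\<Union>j<m. C' j - D' j) = {}"
  shows "intervals n C D \<inter> intervals m C' D' = {}"
proof -
  have "{measure M (D i)<..measure M (C i)} \<inter> {measure M (D' j)<..measure M (C' j)} = {}"
    if "i < n" "j < m" for i j
    using disjoint that chain_rep_mem[OF rep \<open>i < n\<close>] chain_rep_mem[OF rep' \<open>j < m\<close>]
    by (intro Ioc_measure_disjoint) auto
  then show ?thesis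
    unfolding intervals_def by blast
qed

text \<open>By \<open>intervals_mono\<close>, all representations of \<open>X\<close> give the same intervals,
  so this is just their common value.\<close>
definition interval_image :: "'a set \<Rightarrow> real set" where
  "interval_image X = {x. \<exists>n C D. chain_rep I n C D \<and> X = (\<Union>i<n. C i - D i) \<and> x \<in> intervals n C D}"

lemma interval_image_eq:
  assumes rep: "chain_rep I n C D"
  shows "interval_image (\<Union>i<n. C i - D i) = intervals n C D"
proof (intro set_eqI iffI)
  fix x assume "x \<in> interval_image (\<Union>i<n. C i - D i)"
  then obtain n' C' D' where "chain_rep I n' C' D'" "(\<Union>i<n. C i - D i) = (\<Union>i<n'. C' i - D' i)"
    and "x \<in> intervals n' C' D'"
    unfolding interval_image_def by blast
  then show "x \<in> intervals n C D"
    using intervals_mono[OF _ rep, of n' C' D'] by auto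
next
  fix x assume "x \<in> intervals n C D"
  then show "x \<in> interval_image (\<Union>i<n. C i - D i)"
    unfolding interval_image_def using rep by blast
qed

lemma alg_gen_sets: "X \<in> alg_gen I \<Longrightarrow> X \<in> sets M"
proof (erule alg_genE)
  fix n C D assume "chain_rep I n C D" "X = (\<Union>i<n. C i - D i)"
  moreover have "C i - D i \<in> sets M" if "i < n" for i
    using chain_rep_mem[OF \<open>chain_rep I n C D\<close> that] chain_sets by auto
  ultimately show "X \<in> sets M"
    by auto
qed

lemma sets_interval_image: "X \<in> alg_gen I \<Longrightarrow> interval_image X \<in> sets borel"
  by (erule alg_genE) (simp add: interval_image_eq)

lemma emeasure_interval_image: "X \<in> alg_gen I \<Longrightarrow> emeasure lborel (interval_image X) = emeasure M X"
  by (erule alg_genE) (simp add: interval_image_eq emeasure_intervals)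

lemma interval_image_mono:
  assumes "X \<in> alg_gen I" "Y \<in> alg_gen I" "X \<subseteq> Y"
  shows "interval_image X \<subseteq> interval_image Y"
  using assms(1) assms(2) by (elim alg_genE) (use assms(3) in \<open>simp add: interval_image_eq intervals_mono\<close>)

lemma interval_image_disjoint:
  assumes "X \<in> alg_gen I" "Y \<in> alg_gen I" "X \<inter> Y = {}"
  shows "interval_image X \<inter> interval_image Y = {}"
  using assms(1) assms(2) by (elim alg_genE) (use assms(3) in \<open>simp add: interval_image_eq intervals_disjoint\<close>)

lemma disjoint_family_interval_image:
  fixes A :: "'i \<Rightarrow> 'a set"
  assumes "range A \<subseteq> alg_gen I" "disjoint_family A"
  shows "disjoint_family (\<lambda>k. interval_image (A k))"
  unfolding disjoint_family_on_def
proof (intro ballI impI)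
  fix k l :: 'i assume "k \<noteq> l"
  then show "interval_image (A k) \<inter> interval_image (A l) = {}"
    using assms by (intro interval_image_disjoint) (auto simp: disjoint_family_on_def)
qed

lemma interval_image_UN_null_difference:
  fixes A :: "nat \<Rightarrow> 'a set"
  assumes A: "range A \<subseteq> alg_gen I" and disjoint: "disjoint_family A" and union: "(\<Union>k. A k) \<in> alg_gen I"
  shows "interval_image (\<Union>k. A k) - (\<Union>k. interval_image (A k)) \<in> null_sets lborel"
proof -
  let ?S = "\<lambda>k. interval_image (A k)" and ?T = "interval_image (\<Union>k. A k)"
  have S_sets: "range ?S \<subseteq> sets borel"
    using A by (auto intro: sets_interval_image)
  have "disjoint_family ?S"
    using A disjoint by (rule disjoint_family_interval_image)
  have "emeasure lborel ?T = emeasure M (\<Union>k. A k)"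
    using union by (rule emeasure_interval_image)
  also have "\<dots> = (\<Sum>k. emeasure M (A k))"
    using A disjoint alg_gen_sets by (intro suminf_emeasure[symmetric]) auto
  also have "\<dots> = (\<Sum>k. emeasure lborel (?S k))"
    using A by (simp add: emeasure_interval_image range_subsetD)
  also have "\<dots> = emeasure lborel (\<Union>k. ?S k)"
    using S_sets \<open>disjoint_family ?S\<close> by (intro suminf_emeasure) auto
  finally have "emeasure lborel ?T = emeasure lborel (\<Union>k. ?S k)" .
  moreover have "emeasure lborel ?T \<noteq> \<infinity>"
    using union by (simp add: emeasure_interval_image emeasure_eq_measure)
  moreover have "emeasure lborel (?T - (\<Union>k. ?S k)) = emeasure lborel ?T - emeasure lborel (\<Union>k. ?S k)"
    using calculation S_sets sets_interval_image[OF union] interval_image_mono[OF _ union] A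
    by (intro emeasure_Diff) auto
  ultimately show ?thesis
    using S_sets sets_interval_image[OF union] by (intro null_setsI) auto
qed

end

section \<open>Continuity of \<open>v_mu\<close>\<close>

lemma suminf_emeasure_Int_of_null_difference:
  assumes "range S \<subseteq> sets N" "disjoint_family S" "\<And>k. S k \<subseteq> T"
    and "T - (\<Union>k. S k) \<in> null_sets N" and "B \<in> sets N"
  shows "(\<Sum>k. emeasure N (S k \<inter> B)) = emeasure N (T \<inter> B)"
proof -
  have "(\<Sum>k. emeasure N (S k \<inter> B)) = emeasure N (\<Union>k. S k \<inter> B)"
    using assms(1,2,5) by (intro suminf_emeasure) (auto simp: disjoint_family_on_def)
  also have "\<dots> = emeasure N ((\<Union>k. S k \<inter> B) \<union> (T - (\<Union>k. S k)) \<inter> B)"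
    using assms(1,4,5) by (intro emeasure_Un_null_set[symmetric] null_set_Int2) auto
  also have "(\<Union>k. S k \<inter> B) \<union> (T - (\<Union>k. S k)) \<inter> B = T \<inter> B"
    using assms(3) by blast
  finally show ?thesis .
qed

context ac_finite_measures
begin

definition tail_weight :: "real set \<Rightarrow> ennreal" where
  "tail_weight S = (\<integral>\<^sup>+z. indicator {0..} z * emeasure lborel (S \<inter> {..tail z}) \<partial>lborel)"

lemma borel_measurable_emeasure_Int_atMost_tail:
  assumes [measurable]: "S \<in> sets borel"
  shows "(\<lambda>z. emeasure lborel (S \<inter> {..tail z})) \<in> borel_measurable lborel"
proof -
  have "{x\<in>space (lborel \<Otimes>\<^sub>M lborel). snd x \<in> S \<and> snd x \<le> tail (fst x)} \<in> sets (lborel \<Otimes>\<^sub>M lborel)"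
    by measurable
  from lborel.measurable_emeasure_Pair[OF this] show ?thesis
    by (simp add: space_pair_measure vimage_def Int_def)
qed

lemma tail_weight_suminf:
  assumes "range S \<subseteq> sets borel" "disjoint_family S" "\<And>k. S k \<subseteq> T"
    and "T - (\<Union>k. S k) \<in> null_sets lborel"
  shows "(\<Sum>k. tail_weight (S k)) = tail_weight T"
proof -
  have "(\<Sum>k. tail_weight (S k))
      = (\<integral>\<^sup>+z. (\<Sum>k. indicator {0..} z * emeasure lborel (S k \<inter> {..tail z})) \<partial>lborel)"
    unfolding tail_weight_def using assms(1)
    by (intro nn_integral_suminf[symmetric] borel_measurable_times_ennreal
        borel_measurable_emeasure_Int_atMost_tail) auto
  also have "\<dots> = tail_weight T"
    unfolding tail_weight_def ennreal_suminf_cmult using assms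
    by (intro nn_integral_cong arg_cong2[where f = "(*)"] refl suminf_emeasure_Int_of_null_difference) auto
  finally show ?thesis .
qed

end

locale ac_chain = ac_finite_measures M \<mu> + measure_chain M I for M \<mu> :: "'a measure" and I
begin

lemma tail_weight_intervals:
  assumes rep: "chain_rep I n C D"
  shows "ennreal (\<Sum>i<n. v_mu M \<mu> (C i) - v_mu M \<mu> (D i)) = tail_weight (intervals n C D)"
proof -
  have le: "measure M (D i) \<le> measure M (C i)" if "i \<in> {..<n}" for i
    using measure_chain_rep_D_le_C[OF rep] that by simp
  have "ennreal (\<Sum>i<n. v_mu M \<mu> (C i) - v_mu M \<mu> (D i))
      = (\<Sum>i<n. ennreal (v_mu M \<mu> (C i) - v_mu M \<mu> (D i)))"
    using le by (intro sum_ennreal[symmetric]) (simp add: v_mu_mono)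
  also have "\<dots> = (\<Sum>i<n. \<integral>\<^sup>+z. ennreal (indicator {0..} z *
      (min (tail z) (measure M (C i)) - min (tail z) (measure M (D i)))) \<partial>lborel)"
    using le by (intro sum.cong refl ennreal_v_mu_diff)
  also have "\<dots> = (\<integral>\<^sup>+z. (\<Sum>i<n. ennreal (indicator {0..} z *
      (min (tail z) (measure M (C i)) - min (tail z) (measure M (D i))))) \<partial>lborel)"
    by (intro nn_integral_sum[symmetric]) measurable
  also have "\<dots> = tail_weight (intervals n C D)"
  proof -
    have nonneg: "0 \<le> min g (measure M (C i)) - min g (measure M (D i))" if "i \<in> {..<n}" for g i
      using le[OF that] by (auto simp: min_def)
    show ?thesis
      unfolding tail_weight_def emeasure_intervals_Int_atMost[OF rep]
      by (intro nn_integral_cong) (auto simp: indicator_def intro!: sum_ennreal nonneg)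
  qed
  finally show ?thesis .
qed

lemma mu_vI_v_mu:
  assumes "X \<in> alg_gen I"
  shows "0 \<le> mu_vI (v_mu M \<mu>) I X"
    and "ennreal (mu_vI (v_mu M \<mu>) I X) = tail_weight (interval_image X)"
proof -
  obtain n C D where rep: "chain_rep I n C D" and X: "X = (\<Union>i<n. C i - D i)"
    and val: "mu_vI (v_mu M \<mu>) I X = (\<Sum>i<n. v_mu M \<mu> (C i) - v_mu M \<mu> (D i))"
    using mu_vI_some_rep[OF assms] by blast
  show "0 \<le> mu_vI (v_mu M \<mu>) I X"
    unfolding val using measure_chain_rep_D_le_C[OF rep] by (intro sum_nonneg) (simp add: v_mu_mono)
  show "ennreal (mu_vI (v_mu M \<mu>) I X) = tail_weight (interval_image X)"
    using tail_weight_intervals[OF rep] interval_image_eq[OF rep] by (simp add: val flip: X)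
qed

lemma sigma_additive_mu_vI: "sigma_additive_on (alg_gen I) (mu_vI (v_mu M \<mu>) I)"
  unfolding sigma_additive_on_def
proof (intro allI impI)
  fix A :: "nat \<Rightarrow> 'a set"
  assume A: "range A \<subseteq> alg_gen I" and disjoint: "disjoint_family A" and union: "(\<Union>k. A k) \<in> alg_gen I"
  let ?S = "\<lambda>k. interval_image (A k)" and ?T = "interval_image (\<Union>k. A k)"
  have S_sets: "range ?S \<subseteq> sets borel"
    using A by (auto intro: sets_interval_image)
  have "disjoint_family ?S"
    using A disjoint by (rule disjoint_family_interval_image)
  moreover have "?S k \<subseteq> ?T" for k
    using A union by (intro interval_image_mono) auto
  moreover have "?T - (\<Union>k. ?S k) \<in> null_sets lborel"
    using A disjoint union by (rule interval_image_UN_null_difference)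
  ultimately have "(\<Sum>k. tail_weight (?S k)) = tail_weight ?T"
    by (rule tail_weight_suminf[OF S_sets])
  then have "(\<lambda>k. tail_weight (?S k)) sums tail_weight ?T"
    by (metis summableI summable_sums)
  then have "(\<lambda>k. ennreal (mu_vI (v_mu M \<mu>) I (A k))) sums ennreal (mu_vI (v_mu M \<mu>) I (\<Union>k. A k))"
    using A union by (simp add: mu_vI_v_mu(2) range_subsetD)
  then show "(\<lambda>k. mu_vI (v_mu M \<mu>) I (A k)) sums mu_vI (v_mu M \<mu>) I (\<Union>k. A k)"
    using A union by (simp add: mu_vI_v_mu(1) range_subsetD)
qed

end

theorem theorem13:
  fixes M \<mu> :: "'a measure"
  assumes "Sigma_cls M \<noteq> {}"
    and "finite_measure M"
    and "sets \<mu> = sets M" and "finite_measure \<mu>" and "absolutely_continuous M \<mu>"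
  shows "(nondecreasing_cap M (v_mu M \<mu>) \<and> continuous_cap M (v_mu M \<mu>)
           \<and> submodular_cap M (v_mu M \<mu>) \<and> v_mu M \<mu> {} = 0)
    \<and> (\<forall>y\<ge>0. v_mu M \<mu> {\<omega>\<in>space M. RN_deriv M \<mu> \<omega> > ennreal y}
             = measure \<mu> {\<omega>\<in>space M. RN_deriv M \<mu> \<omega> > ennreal y})
    \<and> (\<forall>f. f \<in> borel_measurable M \<longrightarrow> (\<forall>\<omega>\<in>space M. f \<omega> \<ge> 0) \<longrightarrow>
           v_fun M (v_mu M \<mu>) f \<ge> (SUP \<mu>'\<in>same_F_measures M \<mu>. \<integral>\<^sup>+ \<omega>. ennreal (f \<omega>) \<partial>\<mu>'))
    \<and> (\<forall>A\<in>sets M.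
           ennreal (v_mu M \<mu> A) \<ge> (SUP \<mu>'\<in>same_F_measures M \<mu>. emeasure \<mu>' A))"
proof -
  interpret ac_finite_measures M \<mu>
    using assms(2-5) by (intro ac_finite_measures.intro ac_finite_measures_axioms.intro)
  have "continuous_cap M (v_mu M \<mu>)"
    unfolding continuous_cap_def
  proof
    fix I assume "I \<in> Sigma_cls M"
    then interpret ac_chain M \<mu> I
      by unfold_locales (auto simp: Sigma_cls_def)
    show "sigma_additive_on (alg_gen I) (mu_vI (v_mu M \<mu>) I)"
      by (rule sigma_additive_mu_vI)
  qed
  moreover have "nondecreasing_cap M (v_mu M \<mu>)"
    unfolding nondecreasing_cap_def by (auto intro!: v_mu_mono M.finite_measure_mono)
  moreover have "submodular_cap M (v_mu M \<mu>)"
    unfolding submodular_cap_def using v_mu_submodular by auto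
  ultimately show ?thesis
    using v_mu_empty v_mu_superlevel
    by (auto intro!: SUP_least nn_integral_le_v_fun emeasure_le_v_mu)
qed

end
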